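(* Fix $k\ge0$. Let $\mathcal G$ be a discrete groupoid acting self-similarly on a finitely aligned $(k+1)$-graph $\Lambda$, and let $\Gamma=d^{-1}(\mathbb N^k\times\{0\})$. Then $\Gamma\bowtie\mathcal G$ is a concordant subcategory of $\Lambda\bowtie\mathcal G$.
   Context: A $(k+1)$-graph is a countable small category $\Lambda$ with a functor $d:\Lambda\to\mathbb N^{k+1}$ such that whenever $d(\lambda)=m+n$ there are unique $\mu,\nu$ with $\lambda=\mu\nu$, $d(\mu)=m$, $d(\nu)=n$; it is finitely aligned if for all $\mu,\nu$ there is finite $F$ with $\mu\Lambda\cap\nu\Lambda=\bigcup_{c\in F}c\Lambda$. A self-similar action of a discrete groupoid $\mathcal G$ ($\mathcal G^0=\Lambda^0$) on $\Lambda$ consists of a left action $g\triangleright\lambda\in\Lambda$ and right action $g\triangleleft\lambda\in\mathcal G$ (for $s(g)=r(\lambda)$) with $s(g\triangleright\lambda)=r(g\triangleleft\lambda)$, $g\triangleright(\lambda\mu)=(g\triangleright\lambda)((g\triangleleft\lambda)\triangleright\mu)$, $(gh)\triangleleft\lambda=(g\triangleleft(h\triangleright\lambda))(h\triangleleft\lambda)$, and $d(g\triangleright\lambda)=d(\lambda)$. $\Lambda\bowtie\mathcal G$ is the Zappa–Szép product: morphisms $\lambda g$ ($s(\lambda)=r(g)$) with product $\lambda g\mu h=\lambda(g\triangleright\mu)(g\triangleleft\mu)h$; $\Gamma\bowtie\mathcal G$ is a subcategory. For a finitely aligned left-cancellative category $\mathcal X$ ($x\mathcal X=\{xx'\}$,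 $F\mathcal X=\bigcup_{c\in F}c\mathcal X$, $F$ independent if $a\notin a'\mathcal X$ for distinct $a,a'\in F$), a subcategory $\mathcal C$ is concordant if for all $c_1,c_2\in\mathcal C$ with $c_1\mathcal X\cap c_2\mathcal X\ne\emptyset$ there is a finite independent $F\subseteq\mathcal C$ with $c_1\mathcal C\cap c_2\mathcal C=F\mathcal C$ such that whenever $x_1,x_2\in\mathcal X$ satisfy $c_1x_1=c_2x_2$, there exist $a_1,a_2$ with $c_1a_1=c_2a_2\in F$ and $y\in\mathcal X$ with $x_1=a_1y$, $x_2=a_2y$. *)

theory Defs
  imports Main "HOL-Library.Countable_Set"
begin

record ('v, 'm) cat =
  cObj  :: "'v set"
  cMor  :: "'m set"
  cSrc  :: "'m \<Rightarrow> 'v"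
  cRng  :: "'m \<Rightarrow> 'v"
  cComp :: "'m \<Rightarrow> 'm \<Rightarrow> 'm"
  cId   :: "'v \<Rightarrow> 'm"

definition composable :: "('v, 'm) cat \<Rightarrow> 'm \<Rightarrow> 'm \<Rightarrow> bool" where
  "composable C a b \<longleftrightarrow> a \<in> cMor C \<and> b \<in> cMor C \<and> cSrc C a = cRng C b"

definition category :: "('v, 'm) cat \<Rightarrow> bool" where
  "category C \<longleftrightarrow>
     (\<forall>a\<in>cMor C. cSrc C a \<in> cObj C \<and> cRng C a \<in> cObj C) \<and>
     (\<forall>v\<in>cObj C. cId C v \<in> cMor C \<and> cSrc C (cId C v) = v \<and> cRng C (cId C v) = v) \<and>
     (\<forall>a b. composable C a b \<longrightarrow>
        cComp C a b \<in> cMor C \<and> cSrc C (cComp C a b) = cSrc C b \<and> cRng C (cComp C a b) = cRng C a) \<and>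
     (\<forall>a\<in>cMor C. cComp C (cId C (cRng C a)) a = a \<and> cComp C a (cId C (cSrc C a)) = a) \<and>
     (\<forall>a b c. composable C a b \<longrightarrow> composable C b c \<longrightarrow>
        cComp C (cComp C a b) c = cComp C a (cComp C b c))"

definition groupoid :: "('v, 'm) cat \<Rightarrow> bool" where
  "groupoid G \<longleftrightarrow> category G \<and>
     (\<forall>g\<in>cMor G. \<exists>h\<in>cMor G. composable G g h \<and> composable G h g \<and>
        cComp G g h = cId G (cRng G g) \<and> cComp G h g = cId G (cSrc G g))"

definition rideal :: "('v, 'm) cat \<Rightarrow> 'm set \<Rightarrow> 'm \<Rightarrow> 'm set" where
  "rideal X C x = {cComp X x y | y. y \<in> C \<and> composable X x y}"

definition finitely_aligned :: "('v, 'm) cat \<Rightarrow> bool" where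
  "finitely_aligned X \<longleftrightarrow>
     (\<forall>a\<in>cMor X. \<forall>b\<in>cMor X. \<exists>F. finite F \<and> F \<subseteq> cMor X \<and>
        rideal X (cMor X) a \<inter> rideal X (cMor X) b = (\<Union>c\<in>F. rideal X (cMor X) c))"

definition subcategory :: "('v, 'm) cat \<Rightarrow> 'm set \<Rightarrow> bool" where
  "subcategory X C \<longleftrightarrow> C \<subseteq> cMor X \<and>
     (\<forall>a\<in>C. cId X (cRng X a) \<in> C \<and> cId X (cSrc X a) \<in> C) \<and>
     (\<forall>a\<in>C. \<forall>b\<in>C. composable X a b \<longrightarrow> cComp X a b \<in> C)"

definition independent :: "('v, 'm) cat \<Rightarrow> 'm set \<Rightarrow> bool" where
  "independent X F \<longleftrightarrow> (\<forall>a\<in>F. \<forall>a'\<in>F. a \<noteq> a' \<longrightarrow> a \<notin> rideal X (cMor X) a')"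

definition concordant :: "('v, 'm) cat \<Rightarrow> 'm set \<Rightarrow> bool" where
  "concordant X C \<longleftrightarrow> subcategory X C \<and>
     (\<forall>c1\<in>C. \<forall>c2\<in>C. rideal X (cMor X) c1 \<inter> rideal X (cMor X) c2 \<noteq> {} \<longrightarrow>
        (\<exists>F. finite F \<and> F \<subseteq> C \<and> independent X F \<and>
           rideal X C c1 \<inter> rideal X C c2 = (\<Union>c\<in>F. rideal X C c) \<and>
           (\<forall>x1 x2. composable X c1 x1 \<and> composable X c2 x2 \<and> cComp X c1 x1 = cComp X c2 x2 \<longrightarrow>
              (\<exists>a1 a2 y. composable X c1 a1 \<and> composable X c2 a2 \<and>
                 cComp X c1 a1 = cComp X c2 a2 \<and> cComp X c1 a1 \<in> F \<and>
                 composable X a1 y \<and> composable X a2 y \<and>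
                 x1 = cComp X a1 y \<and> x2 = cComp X a2 y))))"

text \<open>An n-graph: degrees live in N^n, encoded as functions nat => nat vanishing at
  coordinates >= n (coordinates 0..n-1), with pointwise addition.\<close>
definition k_graph :: "nat \<Rightarrow> ('v, 'm) cat \<Rightarrow> ('m \<Rightarrow> nat \<Rightarrow> nat) \<Rightarrow> bool" where
  "k_graph n L d \<longleftrightarrow> category L \<and> countable (cMor L) \<and> countable (cObj L) \<and>
     (\<forall>l\<in>cMor L. \<forall>i\<ge>n. d l i = 0) \<and>
     (\<forall>v\<in>cObj L. d (cId L v) = (\<lambda>i. 0)) \<and>
     (\<forall>a b. composable L a b \<longrightarrow> d (cComp L a b) = (\<lambda>i. d a i + d b i)) \<and>
     (\<forall>l\<in>cMor L. \<forall>p q. d l = (\<lambda>i. p i + q i) \<longrightarrow>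
        (\<exists>!(a, b). composable L a b \<and> l = cComp L a b \<and> d a = p \<and> d b = q))"

definition self_similar :: "('v, 'm) cat \<Rightarrow> ('m \<Rightarrow> nat \<Rightarrow> nat) \<Rightarrow> ('v, 'g) cat \<Rightarrow>
    ('g \<Rightarrow> 'm \<Rightarrow> 'm) \<Rightarrow> ('g \<Rightarrow> 'm \<Rightarrow> 'g) \<Rightarrow> bool" where
  "self_similar L d G act res \<longleftrightarrow>
     groupoid G \<and> cObj G = cObj L \<and>
     (\<forall>g\<in>cMor G. \<forall>l\<in>cMor L. cSrc G g = cRng L l \<longrightarrow>
        act g l \<in> cMor L \<and> res g l \<in> cMor G \<and>
        \<comment> \<open>left action of G on Lambda\<close>
        cRng L (act g l) = cRng G g \<and>
        \<comment> \<open>right action of Lambda on G\<close>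
        cSrc G (res g l) = cSrc L l \<and>
        \<comment> \<open>compatibility\<close>
        cSrc L (act g l) = cRng G (res g l) \<and>
        d (act g l) = d l) \<and>
     (\<forall>l\<in>cMor L. act (cId G (cRng L l)) l = l) \<and>
     (\<forall>g\<in>cMor G. res g (cId L (cSrc G g)) = g) \<and>
     (\<forall>g h l. composable G g h \<longrightarrow> l \<in> cMor L \<longrightarrow> cSrc G h = cRng L l \<longrightarrow>
        act (cComp G g h) l = act g (act h l) \<and>
        res (cComp G g h) l = cComp G (res g (act h l)) (res h l)) \<and>
     (\<forall>g l m. g \<in> cMor G \<longrightarrow> composable L l m \<longrightarrow> cSrc G g = cRng L l \<longrightarrow>
        act g (cComp L l m) = cComp L (act g l) (act (res g l) m) \<and>
        res g (cComp L l m) = res (res g l) m)"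

definition zappa_szep :: "('v, 'm) cat \<Rightarrow> ('v, 'g) cat \<Rightarrow>
    ('g \<Rightarrow> 'm \<Rightarrow> 'm) \<Rightarrow> ('g \<Rightarrow> 'm \<Rightarrow> 'g) \<Rightarrow> ('v, 'm \<times> 'g) cat" where
  "zappa_szep L G act res =
     \<lparr> cObj = cObj L,
       cMor = {(l, g). l \<in> cMor L \<and> g \<in> cMor G \<and> cSrc L l = cRng G g},
       cSrc = (\<lambda>(l, g). cSrc G g),
       cRng = (\<lambda>(l, g). cRng L l),
       cComp = (\<lambda>(l, g) (m, h). (cComp L l (act g m), cComp G (res g m) h)),
       cId = (\<lambda>v. (cId L v, cId G v)) \<rparr>"

text \<open>Gamma bowtie G, where Gamma = d^{-1}(N^k x {0}) (last coordinate, index k, is 0).\<close>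
definition gamma_zs :: "nat \<Rightarrow> ('v, 'm) cat \<Rightarrow> ('m \<Rightarrow> nat \<Rightarrow> nat) \<Rightarrow> ('v, 'g) cat \<Rightarrow>
    ('g \<Rightarrow> 'm \<Rightarrow> 'm) \<Rightarrow> ('g \<Rightarrow> 'm \<Rightarrow> 'g) \<Rightarrow> ('m \<times> 'g) set" where
  "gamma_zs k L d G act res = {(l, g) \<in> cMor (zappa_szep L G act res). d l k = 0}"

end

theory Submission
  imports Defs
begin

text \<open>Let \<open>c\<^sub>i = (\<lambda>\<^sub>i, g\<^sub>i) \<in> \<Gamma> \<Join> \<G>\<close>. A common extension \<open>c\<^sub>1x\<^sub>1 = c\<^sub>2x\<^sub>2 = (\<mu>, \<eta>)\<close> in \<open>\<Lambda> \<Join> \<G>\<close> has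
  \<open>\<mu> \<in> \<lambda>\<^sub>1\<Lambda> \<inter> \<lambda>\<^sub>2\<Lambda>\<close>, so by unique factorisation \<open>\<mu>\<close> passes through a minimal common extension
  \<open>\<lambda>\<close> of \<open>\<lambda>\<^sub>1, \<lambda>\<^sub>2\<close>, the one of degree \<open>d \<lambda>\<^sub>1 \<or> d \<lambda>\<^sub>2\<close>. There are finitely many of these by finite
  alignment, any two are mutually independent since they have the same degree, and their last
  degree coordinate vanishes with those of \<open>\<lambda>\<^sub>1, \<lambda>\<^sub>2\<close>. So \<open>F = {(\<lambda>, s(\<lambda>))}\<close> lies in \<open>\<Gamma> \<Join> \<G>\<close>; the
  factorisations \<open>x\<^sub>i = a\<^sub>i y\<close> come from left cancellation in \<open>\<Lambda> \<Join> \<G>\<close>, and they stay inside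
  \<open>\<Gamma> \<Join> \<G>\<close> because membership there is inherited by right factors (degrees are additive).\<close>

section \<open>Categories\<close>

lemma category_comp:
  assumes "category C" "composable C a b"
  shows "cComp C a b \<in> cMor C" "cSrc C (cComp C a b) = cSrc C b" "cRng C (cComp C a b) = cRng C a"
  using assms unfolding category_def by blast+

lemma category_assoc:
  assumes "category C" "composable C a b" "composable C b c"
  shows "cComp C (cComp C a b) c = cComp C a (cComp C b c)"
  using assms unfolding category_def by blast

lemma category_id:
  assumes "category C" "v \<in> cObj C"
  shows "cId C v \<in> cMor C" "cSrc C (cId C v) = v" "cRng C (cId C v) = v"
  using assms unfolding category_def by blast+

lemma category_obj:
  assumes "category C" "a \<in> cMor C"
  shows "cSrc C a \<in> cObj C" "cRng C a \<in> cObj C"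
  using assms unfolding category_def by blast+

lemma category_id_left:
  assumes "category C" "a \<in> cMor C"
  shows "cComp C (cId C (cRng C a)) a = a"
  using assms unfolding category_def by blast

lemma category_id_right:
  assumes "category C" "a \<in> cMor C"
  shows "cComp C a (cId C (cSrc C a)) = a"
  using assms unfolding category_def by blast

lemma composable_id_right:
  assumes "category C" "a \<in> cMor C"
  shows "composable C a (cId C (cSrc C a))"
  using assms category_id(1,3) category_obj(1) unfolding composable_def by metis

lemma composable_comp_left:
  assumes "category C" "composable C a b" "composable C b c"
  shows "composable C (cComp C a b) c"
  using category_comp[OF assms(1,2)] assms(3) unfolding composable_def by simp

lemma composable_comp_right:
  assumes "category C" "composable C a b" "composable C b c"
  shows "composable C a (cComp C b c)"
  using category_comp[OF assms(1,3)] assms(2) unfolding composable_def by simp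

lemma rideal_self:
  assumes "category C" "a \<in> cMor C"
  shows "a \<in> rideal C (cMor C) a"
proof -
  have "composable C a (cId C (cSrc C a))" using composable_id_right[OF assms] .
  then show ?thesis
    using category_id_right[OF assms] unfolding rideal_def composable_def by force
qed

lemma rideal_mor:
  assumes "category C" "a \<in> rideal C (cMor C) b"
  shows "a \<in> cMor C"
  using assms(2) category_comp(1)[OF assms(1)] unfolding rideal_def by blast

lemma groupoid_inverse:
  assumes "groupoid G" "g \<in> cMor G"
  obtains h where "composable G g h" "composable G h g"
    "cComp G g h = cId G (cRng G g)" "cComp G h g = cId G (cSrc G g)"
  using assms unfolding groupoid_def by blast

definition left_cancellative :: "('v, 'm) cat \<Rightarrow> bool" where
  "left_cancellative C \<longleftrightarrow>
     (\<forall>a b b'. composable C a b \<longrightarrow> composable C a b' \<longrightarrow> cComp C a b = cComp C a b' \<longrightarrow> b = b')"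

lemma groupoid_left_cancellative:
  assumes "groupoid G"
  shows "left_cancellative G"
  unfolding left_cancellative_def
proof (intro allI impI)
  fix g h h' assume gh: "composable G g h" and gh': "composable G g h'"
    and eq: "cComp G g h = cComp G g h'"
  have cat: "category G" using assms unfolding groupoid_def by blast
  obtain g' where g': "composable G g' g" "cComp G g' g = cId G (cSrc G g)"
    using groupoid_inverse[OF assms, of g] gh unfolding composable_def by metis
  have "h = cComp G (cComp G g' g) h"
    using g'(2) gh category_id_left[OF cat, of h] unfolding composable_def by simp
  also have "\<dots> = cComp G (cComp G g' g) h'"
    using eq category_assoc[OF cat g'(1) gh] category_assoc[OF cat g'(1) gh'] by simp
  also have "\<dots> = h'"
    using g'(2) gh' category_id_left[OF cat, of h'] unfolding composable_def by simp
  finally show "h = h'" .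
qed

lemma left_cancellative_factor:
  assumes cat: "category C" and lc: "left_cancellative C"
    and cx: "composable C c x" and ca: "composable C c a" and cay: "composable C (cComp C c a) y"
    and eq: "cComp C c x = cComp C (cComp C c a) y"
  shows "composable C a y" "x = cComp C a y"
proof -
  show ay: "composable C a y"
    using ca cay category_comp(2)[OF cat ca] unfolding composable_def by simp
  have "cComp C c x = cComp C c (cComp C a y)"
    using eq category_assoc[OF cat ca ay] by simp
  then show "x = cComp C a y"
    using lc cx composable_comp_right[OF cat ca ay] unfolding left_cancellative_def by blast
qed

lemma subcategory_comp:
  assumes "subcategory C S" "a \<in> S" "b \<in> S" "composable C a b"
  shows "cComp C a b \<in> S"
  using assms unfolding subcategory_def by blast

lemma rideal_subset_rideal:
  assumes cat: "category C" and sub: "subcategory C S"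
    and right_factor: "\<And>a b. composable C a b \<Longrightarrow> cComp C a b \<in> S \<Longrightarrow> b \<in> S"
    and f: "f \<in> S" "f \<in> rideal C (cMor C) c"
  shows "rideal C S f \<subseteq> rideal C S c"
proof
  fix z assume "z \<in> rideal C S f"
  then obtain w where w: "w \<in> S" "composable C f w" "z = cComp C f w"
    unfolding rideal_def by blast
  obtain a where a: "composable C c a" "f = cComp C c a"
    using f(2) unfolding rideal_def by blast
  have "a \<in> S" using right_factor[OF a(1)] a(2) f(1) by simp
  have aw: "composable C a w"
    using a w(2) category_comp(2)[OF cat a(1)] unfolding composable_def by simp
  have "cComp C a w \<in> S" using subcategory_comp[OF sub \<open>a \<in> S\<close> \<open>w \<in> S\<close> aw] .
  moreover have "z = cComp C c (cComp C a w)"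
    using w(3) a(2) category_assoc[OF cat a(1) aw] by simp
  ultimately show "z \<in> rideal C S c"
    using composable_comp_right[OF cat a(1) aw] unfolding rideal_def by blast
qed

lemma common_extension_factor:
  assumes cat: "category C" and lc: "left_cancellative C"
    and f: "f \<in> rideal C (cMor C) c1 \<inter> rideal C (cMor C) c2"
    and x: "composable C c1 x1" "composable C c2 x2" "cComp C c1 x1 = cComp C c2 x2"
    and y: "composable C f y" "cComp C c1 x1 = cComp C f y"
  obtains a1 a2 where "composable C c1 a1" "composable C c2 a2" "f = cComp C c1 a1" "f = cComp C c2 a2"
    "composable C a1 y" "composable C a2 y" "x1 = cComp C a1 y" "x2 = cComp C a2 y"
proof -
  obtain a1 a2 where a: "composable C c1 a1" "f = cComp C c1 a1" "composable C c2 a2" "f = cComp C c2 a2"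
    using f unfolding rideal_def by blast
  show ?thesis
    using that[OF a(1,3,2,4)] y a(2,4) x(3)
      left_cancellative_factor[OF cat lc x(1) a(1), of y] left_cancellative_factor[OF cat lc x(2) a(3), of y]
    by simp
qed

lemma concordantI:
  assumes cat: "category C" and lc: "left_cancellative C" and sub: "subcategory C S"
    and right_factor: "\<And>a b. composable C a b \<Longrightarrow> cComp C a b \<in> S \<Longrightarrow> b \<in> S"
    and generators: "\<And>c1 c2. c1 \<in> S \<Longrightarrow> c2 \<in> S \<Longrightarrow> \<exists>F. finite F \<and> F \<subseteq> S \<and> independent C F \<and>
        F \<subseteq> rideal C (cMor C) c1 \<inter> rideal C (cMor C) c2 \<and>
        (\<forall>x1 x2. composable C c1 x1 \<and> composable C c2 x2 \<and> cComp C c1 x1 = cComp C c2 x2 \<longrightarrow>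
           (\<exists>f\<in>F. cComp C c1 x1 \<in> rideal C (cMor C) f))"
  shows "concordant C S"
  unfolding concordant_def
proof (intro conjI sub ballI impI)
  fix c1 c2 assume c: "c1 \<in> S" "c2 \<in> S"
  obtain F where fin: "finite F" and FS: "F \<subseteq> S" and ind: "independent C F"
    and ext: "F \<subseteq> rideal C (cMor C) c1 \<inter> rideal C (cMor C) c2"
    and cover: "\<forall>x1 x2. composable C c1 x1 \<and> composable C c2 x2 \<and> cComp C c1 x1 = cComp C c2 x2 \<longrightarrow>
      (\<exists>f\<in>F. cComp C c1 x1 \<in> rideal C (cMor C) f)"
    using generators[OF c] by blast
  have factor: "\<exists>a1 a2 y. composable C c1 a1 \<and> composable C c2 a2 \<and>
      cComp C c1 a1 = cComp C c2 a2 \<and> cComp C c1 a1 \<in> F \<and>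
      composable C a1 y \<and> composable C a2 y \<and> x1 = cComp C a1 y \<and> x2 = cComp C a2 y"
    if x: "composable C c1 x1" "composable C c2 x2" "cComp C c1 x1 = cComp C c2 x2" for x1 x2
  proof -
    obtain f y where f: "f \<in> F" "composable C f y" "cComp C c1 x1 = cComp C f y"
      using cover x unfolding rideal_def by blast
    from f(1) ext have "f \<in> rideal C (cMor C) c1 \<inter> rideal C (cMor C) c2" by blast
    from common_extension_factor[OF cat lc this x f(2,3)] show ?thesis
      using f(1) by metis
  qed
  have "rideal C S c1 \<inter> rideal C S c2 \<subseteq> (\<Union>f\<in>F. rideal C S f)"
  proof
    fix z assume "z \<in> rideal C S c1 \<inter> rideal C S c2"
    then obtain x1 x2 where x: "x1 \<in> S" "composable C c1 x1" "z = cComp C c1 x1"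
      "x2 \<in> S" "composable C c2 x2" "z = cComp C c2 x2"
      unfolding rideal_def by blast
    then obtain a1 y where a1: "composable C c1 a1" "cComp C c1 a1 \<in> F"
      "composable C a1 y" "x1 = cComp C a1 y"
      using factor by metis
    have fy: "composable C (cComp C c1 a1) y" using composable_comp_left[OF cat a1(1,3)] .
    have z: "z = cComp C (cComp C c1 a1) y" using x(3) a1(4) category_assoc[OF cat a1(1,3)] by simp
    have "z \<in> S" using subcategory_comp[OF sub c(1) x(1,2)] x(3) by simp
    then have "y \<in> S" using right_factor[OF fy] z by simp
    then show "z \<in> (\<Union>f\<in>F. rideal C S f)" using a1(2) fy z unfolding rideal_def by blast
  qed
  moreover have "rideal C S f \<subseteq> rideal C S c" if "f \<in> F" "c \<in> {c1, c2}" for f c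
  proof (rule rideal_subset_rideal[OF cat sub])
    show "b \<in> S" if "composable C a b" "cComp C a b \<in> S" for a b using right_factor that .
  qed (use that FS ext in blast)+
  ultimately have "rideal C S c1 \<inter> rideal C S c2 = (\<Union>f\<in>F. rideal C S f)" by blast
  then show "\<exists>F. finite F \<and> F \<subseteq> S \<and> independent C F \<and>
      rideal C S c1 \<inter> rideal C S c2 = (\<Union>c\<in>F. rideal C S c) \<and>
      (\<forall>x1 x2. composable C c1 x1 \<and> composable C c2 x2 \<and> cComp C c1 x1 = cComp C c2 x2 \<longrightarrow>
         (\<exists>a1 a2 y. composable C c1 a1 \<and> composable C c2 a2 \<and>
            cComp C c1 a1 = cComp C c2 a2 \<and> cComp C c1 a1 \<in> F \<and>
            composable C a1 y \<and> composable C a2 y \<and> x1 = cComp C a1 y \<and> x2 = cComp C a2 y))"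
    using fin FS ind factor by (intro exI[of _ F] conjI allI impI) auto
qed


section \<open>Higher-rank graphs\<close>

definition minimal_common_extensions ::
    "('v, 'm) cat \<Rightarrow> ('m \<Rightarrow> nat \<Rightarrow> nat) \<Rightarrow> 'm \<Rightarrow> 'm \<Rightarrow> 'm set" where
  "minimal_common_extensions L d l1 l2 =
     {l \<in> rideal L (cMor L) l1 \<inter> rideal L (cMor L) l2. d l = (\<lambda>i. max (d l1 i) (d l2 i))}"

locale higher_rank_graph =
  fixes n :: nat and L :: "('v, 'm) cat" and d :: "'m \<Rightarrow> nat \<Rightarrow> nat"
  assumes k_graph: "k_graph n L d"
begin

lemma category: "category L"
  using k_graph unfolding k_graph_def by blast

lemma degree_comp: "composable L a b \<Longrightarrow> d (cComp L a b) = (\<lambda>i. d a i + d b i)"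
  using k_graph unfolding k_graph_def by blast

lemma degree_id: "v \<in> cObj L \<Longrightarrow> d (cId L v) = (\<lambda>i. 0)"
  using k_graph unfolding k_graph_def by blast

lemma factorization_ex1:
  assumes "l \<in> cMor L" "d l = (\<lambda>i. p i + q i)"
  shows "\<exists>!(a, b). composable L a b \<and> l = cComp L a b \<and> d a = p \<and> d b = q"
  using k_graph assms unfolding k_graph_def by blast

lemma factorization:
  assumes "l \<in> cMor L" "d l = (\<lambda>i. p i + q i)"
  obtains a b where "composable L a b" "l = cComp L a b" "d a = p" "d b = q"
  using ex1_implies_ex[OF factorization_ex1[OF assms]] by blast

lemma factorization_unique:
  assumes ab: "composable L a b" and ab': "composable L a' b'"
    and eq: "cComp L a b = cComp L a' b'" and deg: "d a = d a'"
  shows "a = a'" "b = b'"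
proof -
  have "(\<lambda>i. d a i + d b i) = (\<lambda>i. d a' i + d b' i)"
    using eq by (simp only: degree_comp[OF ab, symmetric] degree_comp[OF ab', symmetric])
  then have "d b' = d b" using deg by (simp add: fun_eq_iff)
  moreover obtain z where "\<And>w. (case w of (x, y) \<Rightarrow> composable L x y \<and> cComp L a b = cComp L x y
      \<and> d x = d a \<and> d y = d b) \<Longrightarrow> w = z"
    using factorization_ex1[OF category_comp(1)[OF category ab] degree_comp[OF ab]]
    unfolding Ex1_def by blast
  ultimately have "(a, b) = z" "(a', b') = z" using ab ab' eq deg by simp_all
  then show "a = a'" "b = b'" by auto
qed

lemma degree_rideal_le:
  assumes "a \<in> rideal L (cMor L) b"
  shows "d b i \<le> d a i"
proof -
  obtain y where "composable L b y" "a = cComp L b y"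
    using assms unfolding rideal_def by blast
  then show ?thesis using degree_comp by simp
qed

lemma rideal_eq_of_degree_le:
  assumes a: "a \<in> rideal L (cMor L) b" and le: "\<And>i. d a i \<le> d b i"
  shows "a = b"
proof -
  obtain u where u: "composable L b u" "a = cComp L b u"
    using a unfolding rideal_def by blast
  have aL: "a \<in> cMor L" using category_comp(1)[OF category u(1)] u(2) by simp
  have "d b = d a" using le degree_rideal_le[OF a] by (simp add: fun_eq_iff le_antisym)
  then show ?thesis
    using factorization_unique(1)[OF u(1) composable_id_right[OF category aL]]
      category_id_right[OF category aL] u(2) by simp
qed

lemma prefix_factorization:
  assumes lx: "composable L l x"
    and lower: "\<And>i. d l i \<le> p i" and upper: "\<And>i. p i \<le> d (cComp L l x) i"
  obtains m y where "composable L m y" "cComp L l x = cComp L m y" "d m = p"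
    "m \<in> rideal L (cMor L) l"
proof -
  let ?lx = "cComp L l x"
  have "d ?lx = (\<lambda>i. p i + (d ?lx i - p i))" using upper by (simp add: fun_eq_iff)
  then obtain m y where my: "composable L m y" "?lx = cComp L m y" "d m = p"
    by (rule factorization[OF category_comp(1)[OF category lx]])
  have mL: "m \<in> cMor L" using my(1) unfolding composable_def by blast
  have "d m = (\<lambda>i. d l i + (p i - d l i))" using my(3) lower by (simp add: fun_eq_iff)
  then obtain u b where ub: "composable L u b" "m = cComp L u b" "d u = d l"
    by (rule factorization[OF mL])
  have by': "composable L b y"
    using ub(1,2) my(1) category_comp(2)[OF category ub(1)] unfolding composable_def by simp
  have "cComp L u (cComp L b y) = ?lx"
    using my(2) ub(2) category_assoc[OF category ub(1) by'] by simp
  then have "u = l"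
    using factorization_unique(1)[OF composable_comp_right[OF category ub(1) by'] lx] ub(3) by simp
  then have "m \<in> rideal L (cMor L) l"
    using ub unfolding rideal_def composable_def by blast
  then show ?thesis using that my by blast
qed

lemma common_extension_through_minimal_common_extension:
  assumes l1x1: "composable L l1 x1" and l2x2: "composable L l2 x2"
    and eq: "cComp L l1 x1 = cComp L l2 x2"
  obtains m y where "m \<in> minimal_common_extensions L d l1 l2" "composable L m y"
    "cComp L l1 x1 = cComp L m y"
proof -
  let ?p = "\<lambda>i. max (d l1 i) (d l2 i)"
  have "cComp L l1 x1 \<in> rideal L (cMor L) l1 \<inter> rideal L (cMor L) l2"
    using l1x1 l2x2 eq unfolding rideal_def composable_def by blast
  then have upper: "?p i \<le> d (cComp L l1 x1) i" "?p i \<le> d (cComp L l2 x2) i" for i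
    using degree_rideal_le eq by simp_all
  obtain m1 y1 where m1: "composable L m1 y1" "cComp L l1 x1 = cComp L m1 y1" "d m1 = ?p"
      "m1 \<in> rideal L (cMor L) l1"
    using prefix_factorization[OF l1x1, of ?p] upper(1) by auto
  obtain m2 y2 where m2: "composable L m2 y2" "cComp L l2 x2 = cComp L m2 y2" "d m2 = ?p"
      "m2 \<in> rideal L (cMor L) l2"
    using prefix_factorization[OF l2x2, of ?p] upper(2) by auto
  have "m1 = m2" using factorization_unique(1)[OF m1(1) m2(1)] m1(2,3) m2(2,3) eq by simp
  then have "m1 \<in> minimal_common_extensions L d l1 l2"
    using m1(3,4) m2(4) unfolding minimal_common_extensions_def by blast
  then show ?thesis using that m1(1,2) by blast
qed

lemma finite_minimal_common_extensions:
  assumes fa: "finitely_aligned L" and "l1 \<in> cMor L" "l2 \<in> cMor L"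
  shows "finite (minimal_common_extensions L d l1 l2)"
proof -
  obtain F where F: "finite F" "F \<subseteq> cMor L"
    "rideal L (cMor L) l1 \<inter> rideal L (cMor L) l2 = (\<Union>c\<in>F. rideal L (cMor L) c)"
    using fa[unfolded finitely_aligned_def, rule_format, OF assms(2,3)] by (elim exE conjE)
  have "m \<in> F" if m: "m \<in> minimal_common_extensions L d l1 l2" for m
  proof -
    have "m \<in> rideal L (cMor L) l1 \<inter> rideal L (cMor L) l2"
      and dm: "d m = (\<lambda>i. max (d l1 i) (d l2 i))"
      using m unfolding minimal_common_extensions_def by simp_all
    then obtain c where c: "c \<in> F" "m \<in> rideal L (cMor L) c"
      unfolding F(3) by blast
    have "c \<in> (\<Union>c\<in>F. rideal L (cMor L) c)"
      using c(1) F(2) rideal_self[OF category] by blast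
    then have "c \<in> rideal L (cMor L) l1 \<inter> rideal L (cMor L) l2"
      unfolding F(3) .
    then have "d l1 i \<le> d c i" "d l2 i \<le> d c i" for i
      using degree_rideal_le by blast+
    then have "d m i \<le> d c i" for i using dm by simp
    then show "m \<in> F" using rideal_eq_of_degree_le[OF c(2)] c(1) by simp
  qed
  then have "minimal_common_extensions L d l1 l2 \<subseteq> F" by blast
  then show ?thesis using F(1) by (rule finite_subset)
qed

lemma degree_zero_eq_id:
  assumes l: "l \<in> cMor L" and deg: "d l = (\<lambda>i. 0)"
  shows "l = cId L (cRng L l)"
proof -
  have r: "cRng L l \<in> cObj L" using category_obj(2)[OF category l] .
  have "composable L (cId L (cRng L l)) l"
    using category_id[OF category r] l unfolding composable_def by simp
  then have "l \<in> rideal L (cMor L) (cId L (cRng L l))"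
    using category_id_left[OF category l] unfolding rideal_def composable_def by force
  then show ?thesis by (rule rideal_eq_of_degree_le) (simp add: deg)
qed

end

section \<open>Self-similar actions and the Zappa-Szep product\<close>

lemma zappa_szep_simps:
  "cObj (zappa_szep L G act res) = cObj L"
  "(l, g) \<in> cMor (zappa_szep L G act res) \<longleftrightarrow> l \<in> cMor L \<and> g \<in> cMor G \<and> cSrc L l = cRng G g"
  "cSrc (zappa_szep L G act res) (l, g) = cSrc G g"
  "cRng (zappa_szep L G act res) (l, g) = cRng L l"
  "cComp (zappa_szep L G act res) (l, g) (m, h) = (cComp L l (act g m), cComp G (res g m) h)"
  "cId (zappa_szep L G act res) v = (cId L v, cId G v)"
  by (simp_all add: zappa_szep_def)

lemma composable_zappa_szep:
  "composable (zappa_szep L G act res) (l, g) (m, h) \<longleftrightarrow>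
     l \<in> cMor L \<and> g \<in> cMor G \<and> cSrc L l = cRng G g \<and>
     m \<in> cMor L \<and> h \<in> cMor G \<and> cSrc L m = cRng G h \<and> cSrc G g = cRng L m"
  unfolding composable_def zappa_szep_simps by blast

locale self_similar_action = higher_rank_graph +
  fixes G :: "('v, 'g) cat" and act :: "'g \<Rightarrow> 'm \<Rightarrow> 'm" and res :: "'g \<Rightarrow> 'm \<Rightarrow> 'g"
  assumes self_similar: "self_similar L d G act res"
begin

abbreviation ZS :: "('v, 'm \<times> 'g) cat" where
  "ZS \<equiv> zappa_szep L G act res"

lemma groupoid: "groupoid G"
  using self_similar unfolding self_similar_def by blast

lemma category_groupoid: "category G"
  using groupoid unfolding groupoid_def by blast

lemma obj_groupoid: "cObj G = cObj L"
  using self_similar unfolding self_similar_def by blast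

lemma act_res:
  assumes "g \<in> cMor G" "l \<in> cMor L" "cSrc G g = cRng L l"
  shows "act g l \<in> cMor L" "res g l \<in> cMor G" "cRng L (act g l) = cRng G g"
    "cSrc G (res g l) = cSrc L l" "cSrc L (act g l) = cRng G (res g l)" "d (act g l) = d l"
  using self_similar assms unfolding self_similar_def by blast+

lemma act_id: "l \<in> cMor L \<Longrightarrow> act (cId G (cRng L l)) l = l"
  using self_similar unfolding self_similar_def by blast

lemma res_id: "g \<in> cMor G \<Longrightarrow> res g (cId L (cSrc G g)) = g"
  using self_similar unfolding self_similar_def by blast

lemma act_res_comp_groupoid:
  assumes "composable G g h" "l \<in> cMor L" "cSrc G h = cRng L l"
  shows "act (cComp G g h) l = act g (act h l)"
    "res (cComp G g h) l = cComp G (res g (act h l)) (res h l)"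
  using self_similar assms unfolding self_similar_def by blast+

lemma act_res_comp_graph:
  assumes "g \<in> cMor G" "composable L l m" "cSrc G g = cRng L l"
  shows "act g (cComp L l m) = cComp L (act g l) (act (res g l) m)"
    "res g (cComp L l m) = res (res g l) m"
  using self_similar assms unfolding self_similar_def by blast+

text \<open>The unit laws missing from the axioms: \<open>res (id) \<lambda>\<close> is an idempotent of the groupoid,
  and \<open>act g (id)\<close> has degree \<open>0\<close>, hence is a vertex.\<close>

lemma res_id_act:
  assumes l: "l \<in> cMor L"
  shows "res (cId G (cRng L l)) l = cId G (cSrc L l)"
proof -
  let ?i = "cId G (cRng L l)" and ?e = "res (cId G (cRng L l)) l"
  have o: "cRng L l \<in> cObj G" using category_obj[OF category l] obj_groupoid by simp
  have i: "?i \<in> cMor G" "cSrc G ?i = cRng L l" "cRng G ?i = cRng L l"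
    using category_id[OF category_groupoid o] by auto
  have ii: "composable G ?i ?i" using i unfolding composable_def by simp
  have e: "?e \<in> cMor G" "cSrc G ?e = cSrc L l" "cRng G ?e = cSrc L l"
    using act_res[OF i(1) l i(2)] act_id[OF l] by auto
  have "cComp G ?e ?e = ?e"
    using act_res_comp_groupoid(2)[OF ii l i(2)] category_id_left[OF category_groupoid i(1)] i(3)
      act_id[OF l] by simp
  also have "\<dots> = cComp G ?e (cId G (cSrc G ?e))"
    using category_id_right[OF category_groupoid e(1)] by simp
  finally have "cComp G ?e ?e = cComp G ?e (cId G (cSrc G ?e))" .
  moreover have "composable G ?e ?e" using e unfolding composable_def by simp
  ultimately have "?e = cId G (cSrc G ?e)"
    using groupoid_left_cancellative[OF groupoid] composable_id_right[OF category_groupoid e(1)]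
    unfolding left_cancellative_def by blast
  then show ?thesis using e(2) by simp
qed

lemma act_id_res:
  assumes g: "g \<in> cMor G"
  shows "act g (cId L (cSrc G g)) = cId L (cRng G g)"
proof -
  let ?v = "cSrc G g"
  have v: "?v \<in> cObj L" using category_obj(1)[OF category_groupoid g] obj_groupoid by simp
  note idv = category_id[OF category v]
  note a = act_res[OF g idv(1) idv(3)[symmetric]]
  have "d (act g (cId L ?v)) = (\<lambda>i. 0)" using a(6) degree_id[OF v] by simp
  then show ?thesis using degree_zero_eq_id[OF a(1)] a(3) by simp
qed

lemma act_inverse:
  assumes "composable G g' g" "cComp G g' g = cId G (cSrc G g)"
    and "m \<in> cMor L" "cSrc G g = cRng L m"
  shows "act g' (act g m) = m"
  using act_res_comp_groupoid(1)[OF assms(1,3)] assms(1,2,4) act_id[OF assms(3)]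
  unfolding composable_def by simp

lemma zs_comp_components:
  assumes "composable ZS (l, g) (m, h)"
  shows "composable L l (act g m)" "composable G (res g m) h"
proof -
  have a: "l \<in> cMor L" "g \<in> cMor G" "cSrc L l = cRng G g" "m \<in> cMor L" "h \<in> cMor G"
    "cSrc L m = cRng G h" "cSrc G g = cRng L m"
    using assms unfolding composable_zappa_szep by auto
  show "composable L l (act g m)" "composable G (res g m) h"
    using act_res[OF a(2,4,7)] a unfolding composable_def by simp_all
qed

lemma zs_comp:
  assumes ab: "composable ZS a b"
  shows "cComp ZS a b \<in> cMor ZS" "cSrc ZS (cComp ZS a b) = cSrc ZS b"
    "cRng ZS (cComp ZS a b) = cRng ZS a"
    "d (fst (cComp ZS a b)) = (\<lambda>i. d (fst a) i + d (fst b) i)"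
proof -
  obtain l g m h where e: "a = (l, g)" "b = (m, h)" by (cases a, cases b)
  have c: "composable ZS (l, g) (m, h)" using ab e by simp
  have a: "g \<in> cMor G" "m \<in> cMor L" "cSrc G g = cRng L m"
    using c unfolding composable_zappa_szep by auto
  note s = act_res[OF a] and lm = zs_comp_components[OF c]
  note k1 = category_comp[OF category lm(1)] and k2 = category_comp[OF category_groupoid lm(2)]
  show "cComp ZS a b \<in> cMor ZS" "cSrc ZS (cComp ZS a b) = cSrc ZS b"
    "cRng ZS (cComp ZS a b) = cRng ZS a"
    "d (fst (cComp ZS a b)) = (\<lambda>i. d (fst a) i + d (fst b) i)"
    unfolding e zappa_szep_simps using k1 k2 s degree_comp[OF lm(1)] by simp_all
qed

lemma zs_assoc:
  assumes ab: "composable ZS a b" and bc: "composable ZS b c"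
  shows "cComp ZS (cComp ZS a b) c = cComp ZS a (cComp ZS b c)"
proof -
  obtain l g m h n j where e: "a = (l, g)" "b = (m, h)" "c = (n, j)"
    by (cases a, cases b, cases c)
  have A: "g \<in> cMor G" "m \<in> cMor L" "cSrc G g = cRng L m" and mh: "cSrc L m = cRng G h"
    using ab unfolding e composable_zappa_szep by auto
  have B: "h \<in> cMor G" "n \<in> cMor L" "cSrc G h = cRng L n"
    using bc unfolding e composable_zappa_szep by auto
  note s1 = act_res[OF A] and s2 = act_res[OF B]
  note c1 = zs_comp_components[OF ab[unfolded e]] and c2 = zs_comp_components[OF bc[unfolded e]]
  have r: "cSrc G (res g m) = cRng L (act h n)" using s1 s2 mh by simp
  note s3 = act_res[OF s1(2) s2(1) r]
  have c5: "composable L (act g m) (act (res g m) (act h n))"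
    using s1 s3 unfolding composable_def by simp
  have c6: "composable G (res (res g m) (act h n)) (res h n)"
    using s2 s3 unfolding composable_def by simp
  show ?thesis
    unfolding e zappa_szep_simps
    using act_res_comp_groupoid[OF c1(2) B(2,3)] act_res_comp_graph[OF A(1) c2(1) A(3)]
      category_assoc[OF category c1(1) c5] category_assoc[OF category_groupoid c6 c2(2)]
    by simp
qed

lemma zs_id_left:
  assumes "a \<in> cMor ZS"
  shows "cComp ZS (cId ZS (cRng ZS a)) a = a"
proof -
  obtain l g where e: "a = (l, g)" by (cases a)
  have A: "l \<in> cMor L" "g \<in> cMor G" "cSrc L l = cRng G g"
    using assms unfolding e zappa_szep_simps by auto
  show ?thesis
    unfolding e zappa_szep_simps
    using act_id[OF A(1)] res_id_act[OF A(1)] category_id_left[OF category A(1)]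
      category_id_left[OF category_groupoid A(2)] A(3) by simp
qed

lemma zs_id_right:
  assumes "a \<in> cMor ZS"
  shows "cComp ZS a (cId ZS (cSrc ZS a)) = a"
proof -
  obtain l g where e: "a = (l, g)" by (cases a)
  have A: "l \<in> cMor L" "g \<in> cMor G" "cSrc L l = cRng G g"
    using assms unfolding e zappa_szep_simps by auto
  show ?thesis
    unfolding e zappa_szep_simps
    using act_id_res[OF A(2)] res_id[OF A(2)] category_id_right[OF category A(1)]
      category_id_right[OF category_groupoid A(2)] A(3) by simp
qed

lemma zs_category: "category ZS"
  unfolding category_def
proof (intro conjI ballI allI impI)
  fix a assume a: "a \<in> cMor ZS"
  obtain l g where e: "a = (l, g)" by (cases a)
  have A: "l \<in> cMor L" "g \<in> cMor G" using a unfolding e zappa_szep_simps by auto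
  show "cSrc ZS a \<in> cObj ZS" "cRng ZS a \<in> cObj ZS"
    unfolding e zappa_szep_simps
    using category_obj(1)[OF category_groupoid A(2)] category_obj(2)[OF category A(1)]
      obj_groupoid by simp_all
  show "cComp ZS (cId ZS (cRng ZS a)) a = a" using zs_id_left[OF a] .
  show "cComp ZS a (cId ZS (cSrc ZS a)) = a" using zs_id_right[OF a] .
next
  fix v assume v: "v \<in> cObj ZS"
  then have "v \<in> cObj G" using obj_groupoid unfolding zappa_szep_simps by simp
  then show "cId ZS v \<in> cMor ZS" "cSrc ZS (cId ZS v) = v" "cRng ZS (cId ZS v) = v"
    using v category_id[OF category] category_id[OF category_groupoid]
    unfolding zappa_szep_simps by simp_all
qed (use zs_comp zs_assoc in blast)+

lemma zs_left_cancellative: "left_cancellative ZS"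
  unfolding left_cancellative_def
proof (intro allI impI)
  fix a b b' assume ab: "composable ZS a b" and ab': "composable ZS a b'"
    and eq: "cComp ZS a b = cComp ZS a b'"
  obtain l g m h m' h' where e: "a = (l, g)" "b = (m, h)" "b' = (m', h')"
    by (cases a, cases b, cases b')
  have A: "g \<in> cMor G" "m \<in> cMor L" "cSrc G g = cRng L m" "m' \<in> cMor L" "cSrc G g = cRng L m'"
    using ab ab' unfolding e composable_zappa_szep by auto
  note c = zs_comp_components[OF ab[unfolded e]] and c' = zs_comp_components[OF ab'[unfolded e]]
  have "cComp L l (act g m) = cComp L l (act g m')" using eq unfolding e zappa_szep_simps by simp
  then have "act g m = act g m'" using factorization_unique(2)[OF c(1) c'(1)] by simp
  moreover obtain g' where "composable G g' g" "cComp G g' g = cId G (cSrc G g)"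
    using groupoid_inverse[OF groupoid A(1)] by blast
  ultimately have m: "m = m'"
    using act_inverse[of g' g m] act_inverse[of g' g m'] A by metis
  have "cComp G (res g m) h = cComp G (res g m) h'" using eq m unfolding e zappa_szep_simps by simp
  then have "h = h'"
    using groupoid_left_cancellative[OF groupoid] c(2) c'(2) m unfolding left_cancellative_def by blast
  then show "b = b'" using e m by simp
qed

lemma gamma_zs_iff: "a \<in> gamma_zs k L d G act res \<longleftrightarrow> a \<in> cMor ZS \<and> d (fst a) k = 0"
  by (cases a) (simp add: gamma_zs_def)

lemma gamma_zs_subcategory: "subcategory ZS (gamma_zs k L d G act res)"
  unfolding subcategory_def
proof (intro conjI ballI impI)
  show "gamma_zs k L d G act res \<subseteq> cMor ZS" using gamma_zs_iff by blast
next
  fix a assume "a \<in> gamma_zs k L d G act res"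
  then have a: "a \<in> cMor ZS" using gamma_zs_iff by blast
  have "cId ZS v \<in> gamma_zs k L d G act res" if "v \<in> cObj ZS" for v
    using that category_id(1)[OF zs_category] degree_id
    unfolding gamma_zs_iff zappa_szep_simps by simp
  then show "cId ZS (cRng ZS a) \<in> gamma_zs k L d G act res"
    "cId ZS (cSrc ZS a) \<in> gamma_zs k L d G act res"
    using category_obj[OF zs_category a] by simp_all
next
  fix a b assume "a \<in> gamma_zs k L d G act res" "b \<in> gamma_zs k L d G act res" "composable ZS a b"
  then show "cComp ZS a b \<in> gamma_zs k L d G act res"
    using zs_comp(1,4) unfolding gamma_zs_iff by simp
qed

lemma gamma_zs_right_factor:
  assumes "composable ZS a b" "cComp ZS a b \<in> gamma_zs k L d G act res"
  shows "b \<in> gamma_zs k L d G act res"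
  using assms zs_comp(4)[OF assms(1)] unfolding gamma_zs_iff composable_def by simp

definition incl :: "'m \<Rightarrow> 'm \<times> 'g" where
  "incl l = (l, cId G (cSrc L l))"

lemma incl_mor: "l \<in> cMor L \<Longrightarrow> incl l \<in> cMor ZS"
  unfolding incl_def zappa_szep_simps
  using category_id[OF category_groupoid] category_obj(1)[OF category] obj_groupoid by simp

lemma zs_comp_incl:
  assumes ly: "composable L l y" and yh: "(y, h) \<in> cMor ZS"
  shows "composable ZS (incl l) (y, h)" "cComp ZS (incl l) (y, h) = (cComp L l y, h)"
proof -
  have A: "l \<in> cMor L" "y \<in> cMor L" "cSrc L l = cRng L y" using ly unfolding composable_def by auto
  have B: "h \<in> cMor G" "cSrc L y = cRng G h" using yh unfolding zappa_szep_simps by auto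
  have "cSrc L l \<in> cObj G" using category_obj(1)[OF category A(1)] obj_groupoid by simp
  note i = category_id[OF category_groupoid this]
  show "composable ZS (incl l) (y, h)"
    unfolding incl_def composable_zappa_szep using A B i by simp
  show "cComp ZS (incl l) (y, h) = (cComp L l y, h)"
    unfolding incl_def zappa_szep_simps
    using act_id[OF A(2)] res_id_act[OF A(2)] category_id_left[OF category_groupoid B(1)] A(3) B(2)
    by simp
qed

text \<open>With \<open>g'\<close> the inverse of \<open>g\<close> and \<open>e\<close> that of \<open>res g (act g' b)\<close>, one has
  \<open>(l, g) (act g' b, e) = (l b, s(b))\<close>.\<close>

lemma incl_in_rideal:
  assumes lg: "(l, g) \<in> cMor ZS" and lb: "composable L l b"
  shows "incl (cComp L l b) \<in> rideal ZS (cMor ZS) (l, g)"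
proof -
  have A: "g \<in> cMor G" "cSrc L l = cRng G g" using lg unfolding zappa_szep_simps by auto
  have B: "b \<in> cMor L" "cSrc L l = cRng L b" using lb unfolding composable_def by auto
  obtain g' where g': "composable G g g'" "composable G g' g" "cComp G g g' = cId G (cRng G g)"
    using groupoid_inverse[OF groupoid A(1)] by blast
  have g'G: "g' \<in> cMor G" "cSrc G g' = cRng L b" "cSrc G g = cRng G g'"
    using g'(1,2) A(2) B(2) unfolding composable_def by auto
  let ?m = "act g' b"
  note s = act_res[OF g'G(1) B(1) g'G(2)]
  have act_back: "act g ?m = b"
    using act_res_comp_groupoid(1)[OF g'(1) B(1) g'G(2)] g'(3) A(2) B(2) act_id[OF B(1)] by simp
  have r: "cSrc G g = cRng L ?m" using s(3) g'G(3) by simp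
  note t = act_res[OF A(1) s(1) r]
  obtain e where e: "composable G (res g ?m) e" "cComp G (res g ?m) e = cId G (cRng G (res g ?m))"
    using groupoid_inverse[OF groupoid t(2)] by blast
  have eG: "e \<in> cMor G" "cSrc G (res g ?m) = cRng G e" using e(1) unfolding composable_def by auto
  have c: "composable ZS (l, g) (?m, e)"
    unfolding composable_zappa_szep using lg s t eG r unfolding zappa_szep_simps by simp
  have "cComp ZS (l, g) (?m, e) = incl (cComp L l b)"
    unfolding zappa_szep_simps incl_def
    using act_back e(2) t category_comp(2)[OF category lb] by simp
  then show ?thesis using c unfolding rideal_def composable_def by force
qed

lemma rideal_incl:
  assumes "incl a \<in> rideal ZS (cMor ZS) (incl b)"
  shows "a \<in> rideal L (cMor L) b"
proof -
  obtain m h where w: "composable ZS (incl b) (m, h)" "incl a = cComp ZS (incl b) (m, h)"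
    using assms unfolding rideal_def by auto
  have A: "b \<in> cMor L" "m \<in> cMor L" "cSrc G (cId G (cSrc L b)) = cRng L m"
    using w(1) unfolding incl_def composable_zappa_szep by auto
  have "cSrc L b \<in> cObj G" using category_obj(1)[OF category A(1)] obj_groupoid by simp
  then have rm: "cRng L m = cSrc L b" using A(3) category_id[OF category_groupoid] by simp
  have bm: "composable L b m" using A rm unfolding composable_def by simp
  have "a = cComp L b m"
    using w(2) act_id[OF A(2)] rm unfolding incl_def zappa_szep_simps by simp
  then show ?thesis using bm unfolding rideal_def composable_def by blast
qed

lemma incl_minimal_common_extensions_subset_gamma_zs:
  assumes "d l1 k = 0" "d l2 k = 0"
  shows "incl ` minimal_common_extensions L d l1 l2 \<subseteq> gamma_zs k L d G act res"
proof
  fix f assume "f \<in> incl ` minimal_common_extensions L d l1 l2"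
  then obtain m where m: "m \<in> rideal L (cMor L) l1" "d m = (\<lambda>i. max (d l1 i) (d l2 i))"
    "f = incl m"
    unfolding minimal_common_extensions_def by blast
  then show "f \<in> gamma_zs k L d G act res"
    using incl_mor[OF rideal_mor[OF category m(1)]] assms unfolding gamma_zs_iff incl_def by simp
qed

lemma independent_incl_minimal_common_extensions:
  "independent ZS (incl ` minimal_common_extensions L d l1 l2)"
  unfolding independent_def
proof (intro ballI impI notI)
  fix a a' assume a: "a \<in> incl ` minimal_common_extensions L d l1 l2"
    and a': "a' \<in> incl ` minimal_common_extensions L d l1 l2"
    and "a \<noteq> a'" and aa': "a \<in> rideal ZS (cMor ZS) a'"
  obtain m m' where "m \<in> minimal_common_extensions L d l1 l2" "a = incl m"
    "m' \<in> minimal_common_extensions L d l1 l2" "a' = incl m'"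
    using a a' by blast
  moreover have "d m = d m'" "m \<in> rideal L (cMor L) m'"
    using calculation rideal_incl aa' unfolding minimal_common_extensions_def by simp_all
  ultimately show False using rideal_eq_of_degree_le[of m m'] \<open>a \<noteq> a'\<close> by simp
qed

lemma incl_minimal_common_extensions_subset_rideal:
  assumes c1: "(l1, g1) \<in> cMor ZS" and c2: "(l2, g2) \<in> cMor ZS"
  shows "incl ` minimal_common_extensions L d l1 l2
    \<subseteq> rideal ZS (cMor ZS) (l1, g1) \<inter> rideal ZS (cMor ZS) (l2, g2)"
proof
  fix f assume "f \<in> incl ` minimal_common_extensions L d l1 l2"
  then obtain m where m: "m \<in> rideal L (cMor L) l1" "m \<in> rideal L (cMor L) l2" "f = incl m"
    unfolding minimal_common_extensions_def by blast
  then obtain y1 y2 where y: "composable L l1 y1" "m = cComp L l1 y1"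
    "composable L l2 y2" "m = cComp L l2 y2"
    unfolding rideal_def by blast
  show "f \<in> rideal ZS (cMor ZS) (l1, g1) \<inter> rideal ZS (cMor ZS) (l2, g2)"
    using incl_in_rideal[OF c1 y(1)] incl_in_rideal[OF c2 y(3)] y(2,4) m(3) by simp
qed

lemma common_extension_in_rideal_incl:
  assumes x1: "composable ZS (l1, g1) x1" and x2: "composable ZS (l2, g2) x2"
    and eq: "cComp ZS (l1, g1) x1 = cComp ZS (l2, g2) x2"
  shows "\<exists>f \<in> incl ` minimal_common_extensions L d l1 l2. cComp ZS (l1, g1) x1 \<in> rideal ZS (cMor ZS) f"
proof -
  obtain m1 h1 m2 h2 where e: "x1 = (m1, h1)" "x2 = (m2, h2)" by (cases x1, cases x2)
  let ?z = "cComp ZS (l1, g1) x1"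
  obtain mu eta where z: "?z = (mu, eta)" by (cases ?z)
  have mu: "mu = cComp L l1 (act g1 m1)" "mu = cComp L l2 (act g2 m2)"
    using z eq unfolding e zappa_szep_simps by auto
  obtain m y where m: "m \<in> minimal_common_extensions L d l1 l2" "composable L m y"
      "cComp L l1 (act g1 m1) = cComp L m y"
    using common_extension_through_minimal_common_extension[OF zs_comp_components(1)[OF x1[unfolded e]]
        zs_comp_components(1)[OF x2[unfolded e]]] mu by metis
  have "(mu, eta) \<in> cMor ZS" using zs_comp(1)[OF x1] z by simp
  then have "(y, eta) \<in> cMor ZS"
    using m(2,3) mu(1) category_comp(2)[OF category m(2)] unfolding zappa_szep_simps composable_def
    by simp
  note c = zs_comp_incl[OF m(2) this]
  have "?z = cComp ZS (incl m) (y, eta)" using c(2) z m(3) mu(1) by simp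
  then have "?z \<in> rideal ZS (cMor ZS) (incl m)"
    using c(1) unfolding rideal_def composable_def by blast
  then show ?thesis using imageI[OF m(1)] by (rule bexI)
qed

theorem concordant_gamma_zs:
  assumes fa: "finitely_aligned L"
  shows "concordant ZS (gamma_zs k L d G act res)"
proof (rule concordantI[OF zs_category zs_left_cancellative gamma_zs_subcategory gamma_zs_right_factor])
  fix c1 c2 assume "c1 \<in> gamma_zs k L d G act res" "c2 \<in> gamma_zs k L d G act res"
  moreover obtain l1 g1 l2 g2 where e: "c1 = (l1, g1)" "c2 = (l2, g2)" by (cases c1, cases c2)
  ultimately have c: "(l1, g1) \<in> cMor ZS" "(l2, g2) \<in> cMor ZS" and deg: "d l1 k = 0" "d l2 k = 0"
    unfolding gamma_zs_iff by auto
  let ?F = "incl ` minimal_common_extensions L d l1 l2"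
  have "finite (minimal_common_extensions L d l1 l2)"
    using finite_minimal_common_extensions[OF fa] c unfolding zappa_szep_simps by blast
  then have "finite ?F" by simp
  moreover have "\<forall>x1 x2. composable ZS c1 x1 \<and> composable ZS c2 x2 \<and> cComp ZS c1 x1 = cComp ZS c2 x2
      \<longrightarrow> (\<exists>f\<in>?F. cComp ZS c1 x1 \<in> rideal ZS (cMor ZS) f)"
    unfolding e by (intro allI impI, elim conjE) (rule common_extension_in_rideal_incl)
  ultimately show "\<exists>F. finite F \<and> F \<subseteq> gamma_zs k L d G act res \<and> independent ZS F \<and>
      F \<subseteq> rideal ZS (cMor ZS) c1 \<inter> rideal ZS (cMor ZS) c2 \<and>
      (\<forall>x1 x2. composable ZS c1 x1 \<and> composable ZS c2 x2 \<and> cComp ZS c1 x1 = cComp ZS c2 x2 \<longrightarrow>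
         (\<exists>f\<in>F. cComp ZS c1 x1 \<in> rideal ZS (cMor ZS) f))"
    using incl_minimal_common_extensions_subset_gamma_zs[OF deg]
      independent_incl_minimal_common_extensions incl_minimal_common_extensions_subset_rideal[OF c]
    unfolding e by (intro exI[of _ ?F] conjI)
qed

end

theorem lemma3p16:
  fixes k :: nat
    and L :: "('v, 'm) cat" and d :: "'m \<Rightarrow> nat \<Rightarrow> nat"
    and G :: "('v, 'g) cat" and act :: "'g \<Rightarrow> 'm \<Rightarrow> 'm" and res :: "'g \<Rightarrow> 'm \<Rightarrow> 'g"
  assumes "k_graph (Suc k) L d"
    and "finitely_aligned L"
    and "self_similar L d G act res"
  shows "concordant (zappa_szep L G act res) (gamma_zs k L d G act res)"
proof -
  interpret self_similar_action "Suc k" L d G act res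
    using assms(1,3) by unfold_locales
  show ?thesis using concordant_gamma_zs[OF assms(2)] .
qed

end
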